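(* Let $G=(G_{ij})_{1\le i,j\le n}$ be a real symmetric matrix and $f\in\{1,\dots,n\}$ such that $G_{ff}=0$, $G_{ij}=0$ whenever $i<f<j$, and the principal submatrices $G'$ on $\{1,\dots,f-1\}$ and $G''$ on $\{f+1,\dots,n\}$ are Gram matrices of simple roots of semisimple Lie algebras $\mathfrak g',\mathfrak g''$ (hence positive definite) whose long roots have squared length $2d'$ resp. $2d''$. For $r',r''\in\mathbb R$ define $m^S_{ij}=r'G_{ij}$ if $i,j\le f$ and $(i,j)\ne(f,f)$; $m^S_{ij}=r''G_{ij}$ if $i,j\ge f$ and $(i,j)\neq(f,f)$; $m^S_{ij}=0$ if $i<f<j$ or $j<f<i$; $m^S_{ff}=1$. If $0<r'\le\frac1{2d'}$, $0<r''\le\frac1{2d''}$ and $\det(m^S)>0$, then $m^S$ is positive definite and $m^S_{ii}\le1$ for all $i$ (so smallness holds and all Nichols algebra relations of $\mathcal B(q)$, $q_{ij}=e^{i\pi m^S_{ij}}$, hold for the corresponding screening operators).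
   Context: This is the Gram matrix in the standard chamber associated to a basic classical Lie superalgebra with a single fermionic simple root $\alpha_f$; $G_{ij}=(\alpha_i,\alpha_j)$. The consequence uses the criterion: positive definiteness and $m_{ii}\le1$ imply that all relations of the diagonal Nichols algebra hold for the Heisenberg screening operators. *)

theory Defs
  imports "Jordan_Normal_Form.Determinant"
begin

(* Matrices are functions nat => nat => real, indexed 1-based on {1..n}. *)

definition mat_of_fun :: "nat \<Rightarrow> (nat \<Rightarrow> nat \<Rightarrow> real) \<Rightarrow> real mat" where
  "mat_of_fun n M = mat n n (\<lambda>(i, j). M (i + 1) (j + 1))"

definition pos_def_on :: "nat set \<Rightarrow> (nat \<Rightarrow> nat \<Rightarrow> real) \<Rightarrow> bool" where
  "pos_def_on I M \<longleftrightarrow>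
     (\<forall>x :: nat \<Rightarrow> real. (\<exists>i\<in>I. x i \<noteq> 0) \<longrightarrow>
        (\<Sum>i\<in>I. \<Sum>j\<in>I. x i * M i j * x j) > 0)"

(* The principal submatrix of G on I is the Gram matrix of a system of simple roots of a
   semisimple Lie algebra: symmetric, positive definite, with positive diagonal, and the
   associated matrix a_ij = 2 G_ij / G_ii is a (generalized) Cartan matrix, i.e. its
   off-diagonal entries are non-positive integers.  (Symmetrizable GCMs with positive definite
   symmetrization are exactly the Cartan matrices of finite type.) *)
definition semisimple_gram :: "nat set \<Rightarrow> (nat \<Rightarrow> nat \<Rightarrow> real) \<Rightarrow> bool" where
  "semisimple_gram I G \<longleftrightarrow>
     (\<forall>i\<in>I. \<forall>j\<in>I. G i j = G j i) \<and>
     (\<forall>i\<in>I. G i i > 0) \<and>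
     (\<forall>i\<in>I. \<forall>j\<in>I. i \<noteq> j \<longrightarrow> (\<exists>k::nat. 2 * G i j / G i i = - real k)) \<and>
     pos_def_on I G"

definition long_root_sqlen :: "nat set \<Rightarrow> (nat \<Rightarrow> nat \<Rightarrow> real) \<Rightarrow> real \<Rightarrow> bool" where
  "long_root_sqlen I G c \<longleftrightarrow> (\<forall>i\<in>I. G i i \<le> c) \<and> (I \<noteq> {} \<longrightarrow> (\<exists>i\<in>I. G i i = c))"

definition mS :: "(nat \<Rightarrow> nat \<Rightarrow> real) \<Rightarrow> nat \<Rightarrow> real \<Rightarrow> real \<Rightarrow> nat \<Rightarrow> nat \<Rightarrow> real" where
  "mS G f r1 r2 i j =
     (if i = f \<and> j = f then 1
      else if i \<le> f \<and> j \<le> f then r1 * G i j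
      else if f \<le> i \<and> f \<le> j then r2 * G i j
      else 0)"

end

theory Submission
  imports Defs
begin

text \<open>
  Off the pivot f, the matrix m^S is block diagonal with blocks r' G' and r'' G'', so its
  quadratic form is positive on the hyperplane x_f = 0.  For a symmetric matrix M that is
  positive on a coordinate hyperplane x_k = 0, pick a pivot p \<noteq> k; then M_pp > 0, and
  completing the square in x_p writes the form of M as M_pp (\<dots>)^2 plus the form of the
  Schur complement of M_pp, while det M = M_pp \<cdot> det(Schur complement).  The Schur
  complement is again positive on a coordinate hyperplane, so induction on the size shows
  that det M > 0 forces M to be positive definite.  The bound on the diagonal is
  m_ii = r' G_ii \<le> r' \<cdot> 2d' \<le> 1, and similarly on the other block.
\<close>

definition quad_form :: "nat set \<Rightarrow> (nat \<Rightarrow> nat \<Rightarrow> real) \<Rightarrow> (nat \<Rightarrow> real) \<Rightarrow> real" where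
  "quad_form I M x = (\<Sum>i\<in>I. \<Sum>j\<in>I. x i * M i j * x j)"

definition symmetric_on :: "nat set \<Rightarrow> (nat \<Rightarrow> nat \<Rightarrow> real) \<Rightarrow> bool" where
  "symmetric_on I M \<longleftrightarrow> (\<forall>i\<in>I. \<forall>j\<in>I. M i j = M j i)"

lemma pos_def_on_iff_quad_form:
  "pos_def_on I M \<longleftrightarrow> (\<forall>x. (\<exists>i\<in>I. x i \<noteq> 0) \<longrightarrow> quad_form I M x > 0)"
  by (simp add: pos_def_on_def quad_form_def)

lemma quad_form_nonneg: "pos_def_on I M \<Longrightarrow> quad_form I M x \<ge> 0"
  by (cases "\<exists>i\<in>I. x i \<noteq> 0") (auto simp: pos_def_on_iff_quad_form quad_form_def)

lemma quad_form_cong: "(\<And>i. i \<in> I \<Longrightarrow> x i = y i) \<Longrightarrow> quad_form I M x = quad_form I M y"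
  by (simp add: quad_form_def)

lemma quad_form_subset:
  assumes "J \<subseteq> I" "finite I" "\<And>i. i \<in> I - J \<Longrightarrow> x i = 0"
  shows "quad_form I M x = quad_form J M x"
  unfolding quad_form_def
  using assms by (intro sum.mono_neutral_cong_right ballI) (auto intro: sum.mono_neutral_right)

lemma quad_form_Diff_singleton:
  assumes "finite I"
  shows "quad_form (I - {k}) M x = quad_form I M (x(k := 0))"
proof -
  have "quad_form (I - {k}) M x = quad_form (I - {k}) M (x(k := 0))"
    by (rule quad_form_cong) simp
  also have "\<dots> = quad_form I M (x(k := 0))"
    using assms by (intro quad_form_subset[symmetric]) auto
  finally show ?thesis .
qed

lemma quad_form_singleton: "quad_form {p} M x = M p p * (x p)\<^sup>2"
  by (simp add: quad_form_def power2_eq_square)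

lemma pos_def_on_diag_pos:
  assumes "pos_def_on I M" "finite I" "p \<in> I"
  shows "M p p > 0"
proof -
  let ?e = "\<lambda>i. if i = p then 1 else 0 :: real"
  have "quad_form I M ?e > 0" using assms by (auto simp: pos_def_on_iff_quad_form)
  moreover have "quad_form I M ?e = quad_form {p} M ?e" using assms by (intro quad_form_subset) auto
  ultimately show ?thesis by (simp add: quad_form_singleton)
qed

lemma pos_def_on_scaled:
  assumes "pos_def_on I M" "c > 0" "\<And>i j. i \<in> I \<Longrightarrow> j \<in> I \<Longrightarrow> M' i j = c * M i j"
  shows "pos_def_on I M'"
proof -
  have "quad_form I M' x = c * quad_form I M x" for x
    unfolding quad_form_def sum_distrib_left using assms(3) by (simp add: ac_simps)
  then show ?thesis using assms(1,2) by (simp add: pos_def_on_iff_quad_form)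
qed

lemma pos_def_on_Un_block:
  assumes "pos_def_on A M" "pos_def_on B M" "finite A" "finite B" "A \<inter> B = {}"
    and "\<And>i j. i \<in> A \<Longrightarrow> j \<in> B \<Longrightarrow> M i j = 0" "\<And>i j. i \<in> B \<Longrightarrow> j \<in> A \<Longrightarrow> M i j = 0"
  shows "pos_def_on (A \<union> B) M"
  unfolding pos_def_on_iff_quad_form
proof (intro allI impI)
  fix x :: "nat \<Rightarrow> real" assume "\<exists>i\<in>A \<union> B. x i \<noteq> 0"
  then have "quad_form A M x > 0 \<or> quad_form B M x > 0"
    using assms(1,2) by (auto simp: pos_def_on_iff_quad_form)
  moreover have "quad_form (A \<union> B) M x = quad_form A M x + quad_form B M x"
    using assms(3-7) by (simp add: quad_form_def sum.union_disjoint sum.distrib)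
  ultimately show "quad_form (A \<union> B) M x > 0"
    using quad_form_nonneg[OF assms(1), of x] quad_form_nonneg[OF assms(2), of x] by linarith
qed

lemma quad_form_image_Suc:
  "quad_form (Suc ` I) M x = quad_form I (\<lambda>i j. M (Suc i) (Suc j)) (\<lambda>i. x (Suc i))"
  by (simp add: quad_form_def sum.reindex)

lemma pos_def_on_image_Suc:
  "pos_def_on (Suc ` I) M \<longleftrightarrow> pos_def_on I (\<lambda>i j. M (Suc i) (Suc j))"
proof
  assume pd: "pos_def_on (Suc ` I) M"
  show "pos_def_on I (\<lambda>i j. M (Suc i) (Suc j))"
    unfolding pos_def_on_iff_quad_form
  proof (intro allI impI)
    fix y :: "nat \<Rightarrow> real" assume "\<exists>i\<in>I. y i \<noteq> 0"
    then have "quad_form (Suc ` I) M (\<lambda>i. y (i - 1)) > 0"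
      using pd by (auto simp: pos_def_on_iff_quad_form)
    then show "quad_form I (\<lambda>i j. M (Suc i) (Suc j)) y > 0" by (simp add: quad_form_image_Suc)
  qed
next
  assume "pos_def_on I (\<lambda>i j. M (Suc i) (Suc j))"
  then show "pos_def_on (Suc ` I) M"
    by (auto simp: pos_def_on_iff_quad_form quad_form_image_Suc)
qed

lemma symmetric_on_image_Suc:
  "symmetric_on (Suc ` I) M \<longleftrightarrow> symmetric_on I (\<lambda>i j. M (Suc i) (Suc j))"
  by (simp add: symmetric_on_def)

definition skip :: "nat \<Rightarrow> nat \<Rightarrow> nat" where
  "skip p i = (if i < p then i else Suc i)"

lemma skip_eq_iff [simp]: "skip p i = skip p j \<longleftrightarrow> i = j"
  by (auto simp: skip_def)

lemma skip_neq [simp]: "skip p i \<noteq> p"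
  by (auto simp: skip_def)

lemma skip_less_Suc: "i < m \<Longrightarrow> skip p i < Suc m"
  by (auto simp: skip_def)

lemma lessThan_Suc_eq_insert_skip:
  assumes "p \<le> m"
  shows "{..<Suc m} = insert p (skip p ` {..<m})"
proof (intro equalityI subsetI)
  fix k assume k: "k \<in> {..<Suc m}"
  show "k \<in> insert p (skip p ` {..<m})"
  proof (cases "k < p")
    case True
    then show ?thesis using assms by (auto simp: skip_def image_iff)
  next
    case False
    then have "k = p \<or> (k - 1 < m \<and> k = skip p (k - 1))" using k by (auto simp: skip_def)
    then show ?thesis by blast
  qed
qed (use assms in \<open>auto simp: skip_def\<close>)

lemma sum_lessThan_Suc_skip:
  assumes "p \<le> m"
  shows "(\<Sum>i<Suc m. g i) = g p + (\<Sum>i<m. g (skip p i))"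
proof -
  have "p \<notin> skip p ` {..<m}" using skip_neq by (metis imageE)
  then show ?thesis
    using assms by (simp add: lessThan_Suc_eq_insert_skip inj_on_def sum.reindex)
qed

lemma skip_surj:
  assumes "k \<le> Suc m"
  obtains p k' where "p \<le> Suc m" "k' \<le> m" "skip p k' = k"
proof (cases "k = 0")
  case True
  then show ?thesis using that[of "Suc m" 0] by (simp add: skip_def)
next
  case False
  then show ?thesis using that[of 0 "k - 1"] assms by (simp add: skip_def)
qed

definition schur :: "nat \<Rightarrow> (nat \<Rightarrow> nat \<Rightarrow> real) \<Rightarrow> nat \<Rightarrow> nat \<Rightarrow> real" where
  "schur p M i j = M (skip p i) (skip p j) - M (skip p i) p * M p (skip p j) / M p p"

lemma schur_symmetric:
  "p \<le> m \<Longrightarrow> symmetric_on {..<Suc m} M \<Longrightarrow> symmetric_on {..<m} (schur p M)"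
  by (auto simp: symmetric_on_def schur_def skip_less_Suc)

lemma det_sparse_row:
  assumes "A \<in> carrier_mat (Suc m) (Suc m)" "p \<le> m" "\<And>j. j \<le> m \<Longrightarrow> j \<noteq> p \<Longrightarrow> A $$ (p, j) = 0"
  shows "det A = A $$ (p, p) * det (mat_delete A p p)"
proof -
  have "det A = (\<Sum>j<Suc m. A $$ (p, j) * cofactor A p j)"
    using assms by (intro laplace_expansion_row) auto
  also have "\<dots> = A $$ (p, p) * cofactor A p p"
    using assms by (subst sum.remove[of _ p]) (auto intro!: sum.neutral)
  finally show ?thesis by (simp add: cofactor_def)
qed

lemma det_sparse_column:
  assumes "A \<in> carrier_mat (Suc m) (Suc m)" "p \<le> m" "\<And>i. i \<le> m \<Longrightarrow> i \<noteq> p \<Longrightarrow> A $$ (i, p) = 0"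
  shows "det A = A $$ (p, p) * det (mat_delete A p p)"
proof -
  have "det A = (\<Sum>i<Suc m. A $$ (i, p) * cofactor A i p)"
    using assms by (intro laplace_expansion_column) auto
  also have "\<dots> = A $$ (p, p) * cofactor A p p"
    using assms by (subst sum.remove[of _ p]) (auto intro!: sum.neutral)
  finally show ?thesis by (simp add: cofactor_def)
qed

lemma det_schur:
  assumes p: "p \<le> m" and Mp: "M p p \<noteq> 0"
  shows "det (mat (Suc m) (Suc m) (\<lambda>(i, j). M i j)) = M p p * det (mat m m (\<lambda>(i, j). schur p M i j))"
proof -
  define A where "A = mat (Suc m) (Suc m) (\<lambda>(i, j). M i j)"
  define L where "L = mat (Suc m) (Suc m)
    (\<lambda>(i, j). if i = j then 1 else if j = p then - M i p / M p p else 0 :: real)"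
  define B where "B = mat (Suc m) (Suc m)
    (\<lambda>(i, j). if i = p then M p j else M i j - M i p / M p p * M p j)"
  have carrier: "A \<in> carrier_mat (Suc m) (Suc m)" "L \<in> carrier_mat (Suc m) (Suc m)"
    "B \<in> carrier_mat (Suc m) (Suc m)"
    by (simp_all add: A_def L_def B_def)
  have "det L = L $$ (p, p) * det (mat_delete L p p)"
    by (rule det_sparse_row[OF carrier(2) p]) (use p in \<open>simp add: L_def\<close>)
  also have "mat_delete L p p = 1\<^sub>m m"
    by (rule eq_matI) (auto simp: mat_delete_def L_def skip_def)
  finally have det_L: "det L = 1"
    using p by (simp add: L_def)
  have "L * A = B"
  proof (rule eq_matI)
    fix i j assume "i < dim_row B" "j < dim_col B"
    then have ij: "i < Suc m" "j < Suc m" by (auto simp: B_def)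
    have "(L * A) $$ (i, j) = (\<Sum>k<Suc m. L $$ (i, k) * A $$ (k, j))"
      using ij carrier by (simp add: scalar_prod_def lessThan_atLeast0)
    also have "\<dots> = (\<Sum>k<Suc m. (if k = i then M i j else 0)
                                 + (if k = p \<and> i \<noteq> p then - M i p / M p p * M p j else 0))"
      using ij by (intro sum.cong) (auto simp: L_def A_def)
    also have "\<dots> = B $$ (i, j)"
      using ij p by (simp add: sum.distrib B_def)
    finally show "(L * A) $$ (i, j) = B $$ (i, j)" .
  qed (simp_all add: B_def L_def A_def)
  then have "det A = det B"
    using det_mult[OF carrier(2,1)] det_L by simp
  also have "\<dots> = B $$ (p, p) * det (mat_delete B p p)"
    by (rule det_sparse_column[OF carrier(3) p]) (use p Mp in \<open>simp add: B_def\<close>)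
  also have "mat_delete B p p = mat m m (\<lambda>(i, j). schur p M i j)"
    by (rule eq_matI) (auto simp: mat_delete_def B_def schur_def skip_def)
  finally show ?thesis using p by (simp add: A_def B_def)
qed

lemma quad_form_schur:
  assumes p: "p \<le> m" and Mp: "M p p \<noteq> 0" and sym: "symmetric_on {..<Suc m} M"
  shows "quad_form {..<Suc m} M x =
           M p p * (x p + (\<Sum>j<m. M p (skip p j) * x (skip p j)) / M p p)\<^sup>2
         + quad_form {..<m} (schur p M) (\<lambda>i. x (skip p i))"
proof -
  define S where "S = (\<Sum>j<m. M p (skip p j) * x (skip p j))"
  define R where "R = (\<Sum>i<m. \<Sum>j<m. x (skip p i) * M (skip p i) (skip p j) * x (skip p j))"
  have M_sym: "M i p = M p i" if "i < Suc m" for i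
    using sym that p by (simp add: symmetric_on_def)
  have "quad_form {..<Suc m} M x
      = x p * M p p * x p + x p * S + (\<Sum>i<m. x (skip p i) * M (skip p i) p * x p) + R"
    unfolding quad_form_def S_def R_def
    by (simp only: sum_lessThan_Suc_skip[OF p]) (simp add: sum.distrib sum_distrib_left algebra_simps)
  also have "(\<Sum>i<m. x (skip p i) * M (skip p i) p * x p) = x p * S"
    unfolding S_def sum_distrib_left
    by (intro sum.cong) (auto simp: M_sym skip_less_Suc)
  also have "R = quad_form {..<m} (schur p M) (\<lambda>i. x (skip p i)) + S * S / M p p"
  proof -
    have "quad_form {..<m} (schur p M) (\<lambda>i. x (skip p i))
        = R - (\<Sum>i<m. \<Sum>j<m. (M p (skip p i) * x (skip p i)) * (M p (skip p j) * x (skip p j))) / M p p"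
      unfolding quad_form_def R_def schur_def
      by (simp add: sum_subtractf sum_divide_distrib right_diff_distrib left_diff_distrib
                    M_sym skip_less_Suc)
         (simp add: mult_ac)
    also have "(\<Sum>i<m. \<Sum>j<m. (M p (skip p i) * x (skip p i)) * (M p (skip p j) * x (skip p j))) = S * S"
      unfolding S_def by (simp add: sum_product)
    finally show ?thesis by simp
  qed
  finally show ?thesis
    unfolding S_def[symmetric] using Mp by (simp add: field_simps power2_eq_square)
qed

lemma quad_form_schur_extend:
  assumes "p \<le> m" "M p p \<noteq> 0" "symmetric_on {..<Suc m} M"
  obtains x where "\<And>i. x (skip p i) = y i"
    and "quad_form {..<Suc m} M x = quad_form {..<m} (schur p M) y"
proof -
  \<comment> \<open>the value at p makes the square term of the decomposition vanish\<close>
  define x where "x k = (if k = p then - (\<Sum>j<m. M p (skip p j) * y j) / M p p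
                          else y (if k < p then k else k - 1))" for k
  have x_skip: "x (skip p i) = y i" for i
    by (auto simp: x_def skip_def)
  have "quad_form {..<Suc m} M x = quad_form {..<m} (schur p M) y"
    using quad_form_schur[OF assms, of x] assms(2) by (simp add: x_skip) (simp add: x_def)
  with x_skip that show ?thesis by blast
qed

lemma pos_def_on_of_schur:
  assumes p: "p \<le> m" and Mp: "M p p > 0" and sym: "symmetric_on {..<Suc m} M"
    and pd: "pos_def_on {..<m} (schur p M)"
  shows "pos_def_on {..<Suc m} M"
  unfolding pos_def_on_iff_quad_form
proof (intro allI impI)
  fix x :: "nat \<Rightarrow> real" assume "\<exists>i\<in>{..<Suc m}. x i \<noteq> 0"
  then obtain i where i: "i < Suc m" "x i \<noteq> 0" by blast
  let ?y = "\<lambda>i. x (skip p i)"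
  note decomp = quad_form_schur[OF p _ sym, of x]
  show "quad_form {..<Suc m} M x > 0"
  proof (cases "\<exists>j<m. ?y j \<noteq> 0")
    case True
    then have "quad_form {..<m} (schur p M) ?y > 0"
      using pd by (auto simp: pos_def_on_iff_quad_form)
    then show ?thesis using decomp Mp by (simp add: add_nonneg_pos)
  next
    case False
    then have "i = p"
      using i lessThan_Suc_eq_insert_skip[OF p] by auto
    moreover have "quad_form {..<m} (schur p M) ?y = 0"
      using False by (simp add: quad_form_def)
    ultimately show ?thesis using decomp Mp False i(2) by simp
  qed
qed

lemma schur_pos_def_on_Diff:
  assumes p: "p \<le> m" and Mp: "M p p \<noteq> 0" and sym: "symmetric_on {..<Suc m} M"
    and pd: "pos_def_on ({..<Suc m} - {skip p k}) M"
  shows "pos_def_on ({..<m} - {k}) (schur p M)"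
  unfolding pos_def_on_iff_quad_form
proof (intro allI impI)
  fix y :: "nat \<Rightarrow> real" assume "\<exists>i\<in>{..<m} - {k}. y i \<noteq> 0"
  then obtain i where i: "i < m" "i \<noteq> k" "y i \<noteq> 0" by blast
  obtain x where x: "\<And>j. x (skip p j) = (y(k := 0)) j"
    and qx: "quad_form {..<Suc m} M x = quad_form {..<m} (schur p M) (y(k := 0))"
    using quad_form_schur_extend[OF p Mp sym] by blast
  have "x (skip p i) \<noteq> 0" "skip p i \<in> {..<Suc m} - {skip p k}"
    using x i by (auto simp: skip_less_Suc)
  then have "quad_form ({..<Suc m} - {skip p k}) M x > 0"
    using pd unfolding pos_def_on_iff_quad_form by blast
  also have "quad_form ({..<Suc m} - {skip p k}) M x = quad_form {..<Suc m} M x"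
    using x[of k] by (simp add: quad_form_Diff_singleton fun_upd_idem)
  finally show "quad_form ({..<m} - {k}) (schur p M) y > 0"
    by (simp add: qx quad_form_Diff_singleton)
qed

lemma pos_def_on_of_det_pos:
  assumes "symmetric_on {..<Suc m} M" "k \<le> m" "pos_def_on ({..<Suc m} - {k}) M"
    and "det (mat (Suc m) (Suc m) (\<lambda>(i, j). M i j)) > 0"
  shows "pos_def_on {..<Suc m} M"
  using assms
proof (induction m arbitrary: M k)
  case 0
  have "M 0 0 > 0"
    using "0.prems"(4) det_single[of "mat 1 1 (\<lambda>(i, j). M i j)"] by simp
  then show ?case
    by (auto simp: pos_def_on_iff_quad_form lessThan_Suc quad_form_singleton)
next
  case (Suc m)
  obtain p k' where p: "p \<le> Suc m" and k': "k' \<le> m" "skip p k' = k"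
    using skip_surj[OF Suc.prems(2)] .
  have Mp: "M p p > 0"
    using pos_def_on_diag_pos[OF Suc.prems(3)] p skip_neq[of p k'] k' by simp
  have "pos_def_on {..<Suc m} (schur p M)"
  proof (rule Suc.IH)
    show "symmetric_on {..<Suc m} (schur p M)"
      using schur_symmetric[OF p Suc.prems(1)] .
    show "pos_def_on ({..<Suc m} - {k'}) (schur p M)"
      using schur_pos_def_on_Diff[OF p _ Suc.prems(1)] Mp Suc.prems(3) k' by simp
    show "det (mat (Suc m) (Suc m) (\<lambda>(i, j). schur p M i j)) > 0"
      using det_schur[OF p, of M] Mp Suc.prems(4) by (simp add: zero_less_mult_iff)
  qed (fact k')
  then show ?case using pos_def_on_of_schur[OF p Mp Suc.prems(1)] by blast
qed

lemma symmetric_on_mS: "symmetric_on I G \<Longrightarrow> symmetric_on I (mS G f r1 r2)"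
  by (auto simp: symmetric_on_def mS_def)

lemma pos_def_on_mS_Diff:
  assumes "f \<le> n" "pos_def_on {1..<f} G" "pos_def_on {f<..n} G" "0 < r1" "0 < r2"
  shows "pos_def_on ({1..n} - {f}) (mS G f r1 r2)"
proof -
  have "pos_def_on {1..<f} (mS G f r1 r2)"
    using assms(2,4) by (rule pos_def_on_scaled) (simp add: mS_def)
  moreover have "pos_def_on {f<..n} (mS G f r1 r2)"
    using assms(3,5) by (rule pos_def_on_scaled) (simp add: mS_def)
  ultimately have "pos_def_on ({1..<f} \<union> {f<..n}) (mS G f r1 r2)"
    by (rule pos_def_on_Un_block) (auto simp: mS_def)
  moreover have "{1..n} - {f} = {1..<f} \<union> {f<..n}"
    using assms(1) by auto
  ultimately show ?thesis by simp
qed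

lemma scaled_diag_le_one:
  assumes "semisimple_gram I G" "long_root_sqlen I G c" "0 < r" "r \<le> 1 / c" "i \<in> I"
  shows "r * G i i \<le> 1"
proof -
  have "0 < G i i" "G i i \<le> c"
    using assms(1,2,5) by (auto simp: semisimple_gram_def long_root_sqlen_def)
  then have "r * G i i \<le> r * c" "r * c \<le> 1"
    using assms(3,4) by (simp_all add: field_simps)
  then show ?thesis by linarith
qed

theorem mainTheorem7:
  fixes n f :: nat and G :: "nat \<Rightarrow> nat \<Rightarrow> real" and r1 r2 d1 d2 :: real
  assumes "1 \<le> f" and "f \<le> n"
    and "\<forall>i\<in>{1..n}. \<forall>j\<in>{1..n}. G i j = G j i"
    and "G f f = 0"
    and "\<forall>i j. 1 \<le> i \<and> i < f \<and> f < j \<and> j \<le> n \<longrightarrow> G i j = 0"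
    and "semisimple_gram {1..<f} G" and "long_root_sqlen {1..<f} G (2 * d1)"
    and "semisimple_gram {f<..n} G" and "long_root_sqlen {f<..n} G (2 * d2)"
    and "0 < r1" and "r1 \<le> 1 / (2 * d1)"
    and "0 < r2" and "r2 \<le> 1 / (2 * d2)"
    and "det (mat_of_fun n (mS G f r1 r2)) > 0"
  shows "pos_def_on {1..n} (mS G f r1 r2) \<and> (\<forall>i\<in>{1..n}. mS G f r1 r2 i i \<le> 1)"
proof
  let ?M = "mS G f r1 r2"
  let ?N = "\<lambda>i j. ?M (Suc i) (Suc j)"
  obtain m where m: "n = Suc m" using assms(1,2) by (cases n) auto
  have "pos_def_on {..<Suc m} ?N"
  proof (rule pos_def_on_of_det_pos)
    show "symmetric_on {..<Suc m} ?N"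
      using symmetric_on_mS[of "{1..n}" G] symmetric_on_image_Suc[of "{..<n}" ?M] assms(3) m
      by (simp add: symmetric_on_def image_Suc_lessThan)
    show "pos_def_on ({..<Suc m} - {f - 1}) ?N"
    proof -
      have "pos_def_on ({1..n} - {f}) ?M"
        using pos_def_on_mS_Diff assms(2,6,8,10,12) by (simp add: semisimple_gram_def)
      moreover have "{1..n} - {f} = Suc ` ({..<Suc m} - {f - 1})"
        using assms(1) m by (simp add: image_set_diff image_Suc_lessThan)
      ultimately show ?thesis by (simp add: pos_def_on_image_Suc)
    qed
    show "det (mat (Suc m) (Suc m) (\<lambda>(i, j). ?N i j)) > 0"
      using assms(14) m by (simp add: mat_of_fun_def)
  qed (use assms(1,2) m in simp)
  then show "pos_def_on {1..n} ?M"
    using pos_def_on_image_Suc[of "{..<n}" ?M] m by (simp add: image_Suc_lessThan)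
next
  show "\<forall>i\<in>{1..n}. mS G f r1 r2 i i \<le> 1"
    using scaled_diag_le_one[OF assms(6,7,10,11)] scaled_diag_le_one[OF assms(8,9,12,13)]
    by (auto simp: mS_def)
qed

end
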